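(* Let $X,Y$ be real Banach spaces such that $X^*$ and $Y$ have octahedral norm. Let $H$ be a closed subspace of $L(X,Y)$ such that $X^*\otimes Y\subseteq H$. Then $H$ has octahedral norm.
   Context: The norm of a Banach space $Z$ is octahedral if for every finite-dimensional subspace $E$ of $Z$ and every $\varepsilon>0$ there is $y\in S_Z$ with $\|x+\lambda y\|\ge(1-\varepsilon)(\|x\|+|\lambda|)$ for all $x\in E$ and scalars $\lambda$. $L(X,Y)$ is the space of bounded linear operators with operator norm; $X^*\otimes Y$ is the space of finite-rank operators spanned by $x\mapsto x^*(x)y$. *)

theory Defs
  imports "HOL-Analysis.Analysis"
begin

text \<open>Octahedrality of the norm of a (linear) subspace Z of a real normed space,
  with the finite-dimensional subspaces E of Z given as spans of finite sets and
  the element y taken from the unit sphere of Z.\<close>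
definition octahedral_on :: "'a::real_normed_vector set \<Rightarrow> bool" where
  "octahedral_on Z \<longleftrightarrow>
     (\<forall>F \<epsilon>. finite F \<and> F \<subseteq> Z \<and> \<epsilon> > 0 \<longrightarrow>
        (\<exists>y\<in>Z. norm y = 1 \<and>
           (\<forall>x\<in>span F. \<forall>t::real.
               norm (x + t *\<^sub>R y) \<ge> (1 - \<epsilon>) * (norm x + \<bar>t\<bar>))))"

abbreviation octahedral_norm :: "'a::real_normed_vector itself \<Rightarrow> bool" where
  "octahedral_norm _ \<equiv> octahedral_on (UNIV :: 'a set)"

definition rank_one :: "('a::real_normed_vector \<Rightarrow>\<^sub>L real) \<Rightarrow> 'b::real_normed_vector \<Rightarrow> ('a \<Rightarrow>\<^sub>L 'b)" where
  "rank_one f y = Blinfun (\<lambda>x. f x *\<^sub>R y)"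

text \<open>X^* \<otimes> Y as a subspace of L(X,Y): the span of all rank-one operators.\<close>
definition tensor_dual :: "('a::real_normed_vector \<Rightarrow>\<^sub>L 'b::real_normed_vector) set" where
  "tensor_dual = span {rank_one f y | f y. True}"

end

theory Submission
  imports Defs
begin

text \<open>
  Octahedrality only has to be checked on finitely many unit vectors: the unit
  sphere of a finite-dimensional subspace has finite \<delta>-nets, and almost orthogonality to
  the points of a net transfers to the whole subspace. Given finitely many unit operators S,
  pick (Hahn-Banach) functionals \<phi>_S of norm \<le> 1 such that \<phi>_S \<circ> S almost has norm 1;
  octahedrality of X* gives a unit f almost orthogonal to all \<phi>_S \<circ> S, hence points z_S in
  the unit ball where both \<phi>_S \<circ> S and f are almost 1; octahedrality of Y gives a unit y almost
  orthogonal to all S z_S. Testing S + t (f \<otimes> y) at z_S shows that the unit rank-one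
  operator f \<otimes> y, which lies in H, is almost orthogonal to every S.
\<close>

lemma closed_if_closed_Int_cball:
  fixes S :: "'a::real_normed_vector set"
  assumes "\<And>r. closed (S \<inter> cball 0 r)"
  shows "closed S"
proof (rule closed_sequential_limits[THEN iffD2], intro allI impI)
  fix x l assume xl: "(\<forall>n. x n \<in> S) \<and> x \<longlonglongrightarrow> l"
  then obtain r where "\<And>n. norm (x n) \<le> r"
    using convergent_imp_bounded[of x] xl unfolding bounded_iff convergent_def by blast
  hence "\<forall>n. x n \<in> S \<inter> cball 0 r" using xl by auto
  hence "l \<in> S \<inter> cball 0 r"
    using xl assms[of r] closed_sequential_limits by blast
  thus "l \<in> S" by simp
qed

lemma span_insert_coefficient_bound:
  fixes b :: "'a::real_normed_vector"
  assumes d: "\<forall>w\<in>span F. d \<le> dist b w" and v: "v \<in> span (insert b F)"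
  obtains k w where "v = k *\<^sub>R b + w" "w \<in> span F" "\<bar>k\<bar> * d \<le> norm v"
proof -
  obtain k where w: "v - k *\<^sub>R b \<in> span F" using v by (auto simp: span_breakdown_eq)
  have "\<bar>k\<bar> * d \<le> norm v"
  proof (cases "k = 0")
    case False
    have "(- (1/k)) *\<^sub>R (v - k *\<^sub>R b) \<in> span F" using w span_scale by blast
    hence "d \<le> dist b ((- (1/k)) *\<^sub>R (v - k *\<^sub>R b))" using d by blast
    also have "\<dots> = norm ((1/k) *\<^sub>R v)" using False by (simp add: dist_norm algebra_simps)
    finally show ?thesis using False by (simp add: field_simps)
  qed simp
  with w that[of k "v - k *\<^sub>R b"] show ?thesis by simp
qed

text \<open>Induction step for boundedly compact subspaces: adding a vector b at positive distance d
  from span F, the bounded part of the new span is the image of the compact set of pairs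
  (k, w) with |k| \<le> r/d and w in a ball of span F.\<close>
lemma compact_span_insert_Int_cball:
  fixes b :: "'a::real_normed_vector"
  assumes compact: "\<And>r. compact (span F \<inter> cball 0 r)"
    and d: "d > 0" "\<forall>w\<in>span F. d \<le> dist b w"
  shows "compact (span (insert b F) \<inter> cball 0 r)"
proof -
  define K where "K = (\<lambda>p. fst p *\<^sub>R b + snd p) `
      ({-r/d..r/d} \<times> (span F \<inter> cball 0 (r + r / d * norm b)))"
  have K: "compact K" unfolding K_def
    by (intro compact_continuous_image continuous_intros compact_Times compact_Icc compact)
  have "span (insert b F) \<inter> cball 0 r = K \<inter> cball 0 r"
  proof (intro equalityI subsetI)
    fix v assume v: "v \<in> span (insert b F) \<inter> cball 0 r"
    then obtain k w where kw: "v = k *\<^sub>R b + w" "w \<in> span F" "\<bar>k\<bar> * d \<le> norm v"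
      using span_insert_coefficient_bound[OF d(2)] by blast
    have nv: "norm v \<le> r" using v by simp
    hence kr: "\<bar>k\<bar> \<le> r / d" using kw(3) d by (simp add: field_simps)
    have "norm w \<le> norm v + \<bar>k\<bar> * norm b"
      using kw(1) norm_triangle_ineq4[of v "k *\<^sub>R b"] by simp
    also have "\<dots> \<le> r + r / d * norm b"
      using nv kr by (intro add_mono mult_right_mono) auto
    finally show "v \<in> K \<inter> cball 0 r"
      unfolding K_def using v kw kr by (auto intro!: image_eqI[of _ _ "(k, w)"])
  next
    fix v assume "v \<in> K \<inter> cball 0 r"
    then obtain k w where "v = k *\<^sub>R b + w" "w \<in> span F" "norm v \<le> r"
      unfolding K_def by auto
    thus "v \<in> span (insert b F) \<inter> cball 0 r"
      by (auto intro: span_add span_scale span_base span_mono[THEN subsetD, of F])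
  qed
  thus ?thesis using K by (simp add: compact_Int_closed)
qed

text \<open>Finite-dimensional subspaces of a normed space are closed and boundedly compact
  (induction on the spanning set; a new direction b keeps a positive distance from the
  closed old span).\<close>
lemma compact_span_Int_cball:
  fixes F :: "'a::real_normed_vector set"
  assumes "finite F"
  shows "closed (span F) \<and> (\<forall>r. compact (span F \<inter> cball 0 r))"
  using assms
proof (induction F rule: finite_induct)
  case empty
  have "span {} \<inter> cball (0::'a) r = {0}" if "r \<ge> 0" for r using that by auto
  moreover have "span {} \<inter> cball (0::'a) r = {}" if "r < 0" for r using that by auto
  ultimately have "compact (span {} \<inter> cball (0::'a) r)" for r
    by (cases "r \<ge> 0") auto
  thus ?case by auto
next
  case (insert b F)
  show ?case
  proof (cases "b \<in> span F")
    case True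
    thus ?thesis using insert.IH by (simp add: span_redundant)
  next
    case False
    have d: "infdist b (span F) > 0"
      using infdist_pos_not_in_closed[OF _ _ False] insert.IH span_zero by (metis empty_iff)
    have "\<forall>w\<in>span F. infdist b (span F) \<le> dist b w" by (auto intro: infdist_le)
    hence cp: "compact (span (insert b F) \<inter> cball 0 r)" for r
      using compact_span_insert_Int_cball[OF _ d] insert.IH by blast
    have "closed (span (insert b F))"
      by (rule closed_if_closed_Int_cball) (use cp compact_imp_closed in blast)
    thus ?thesis using cp by blast
  qed
qed

lemma finite_net_sphere_span:
  fixes F :: "'a::real_normed_vector set"
  assumes "finite F" "\<delta> > 0"
  obtains N where "finite N" "N \<subseteq> span F \<inter> sphere 0 1"
    "span F \<inter> sphere 0 1 \<subseteq> (\<Union>S\<in>N. ball S \<delta>)"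
proof -
  have "compact (span F \<inter> cball 0 1)" using compact_span_Int_cball[OF assms(1)] by blast
  hence "compact ((span F \<inter> cball 0 1) \<inter> sphere 0 1)"
    by (rule compact_Int_closed) (metis cball_diff_eq_sphere closed_Diff closed_cball open_ball)
  moreover have "(span F \<inter> cball 0 1) \<inter> sphere 0 1 = span F \<inter> sphere 0 1"
    by (auto simp: sphere_def cball_def)
  ultimately have K: "compact (span F \<inter> sphere 0 1)" by (simp only:)
  have "span F \<inter> sphere 0 1 \<subseteq> (\<Union>S\<in>span F \<inter> sphere 0 1. ball S \<delta>)"
    using assms(2) by auto
  then obtain N where "N \<subseteq> span F \<inter> sphere 0 1" "finite N"
      "span F \<inter> sphere 0 1 \<subseteq> (\<Union>S\<in>N. ball S \<delta>)"
    using compactE_image[OF K, of "span F \<inter> sphere 0 1" "\<lambda>S. ball S \<delta>"] by blast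
  thus ?thesis using that by blast
qed

lemma almost_orthogonal_perturb:
  fixes x y S0 :: "'a::real_normed_vector"
  assumes "x \<noteq> 0" and close: "dist S0 (x /\<^sub>R norm x) < \<delta>"
    and S0: "\<And>s. (1 - \<delta>) * (1 + \<bar>s\<bar>) \<le> norm (S0 + s *\<^sub>R y)"
  shows "(1 - 2*\<delta>) * (norm x + \<bar>t\<bar>) \<le> norm (x + t *\<^sub>R y)"
proof -
  define r where "r = norm x"
  have r: "r > 0" using assms(1) by (simp add: r_def)
  have "(1 - \<delta>) * (1 + \<bar>t / r\<bar>) \<le> norm (S0 + (t / r) *\<^sub>R y)" by (rule S0)
  also have "\<dots> \<le> norm (x /\<^sub>R r + (t / r) *\<^sub>R y) + norm (S0 - x /\<^sub>R r)"
    using norm_triangle_ineq[of "x /\<^sub>R r + (t / r) *\<^sub>R y" "S0 - x /\<^sub>R r"]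
    by (simp add: algebra_simps)
  also have "\<dots> \<le> norm (x + t *\<^sub>R y) / r + \<delta>"
  proof -
    have "x /\<^sub>R r + (t / r) *\<^sub>R y = (x + t *\<^sub>R y) /\<^sub>R r" by (simp add: algebra_simps divide_inverse)
    thus ?thesis using close r by (simp add: r_def dist_norm divide_inverse_commute)
  qed
  finally have "(1 - \<delta>) * (1 + \<bar>t\<bar> / r) \<le> norm (x + t *\<^sub>R y) / r + \<delta>"
    using r by simp
  hence "r * ((1 - \<delta>) * (1 + \<bar>t\<bar> / r)) \<le> r * (norm (x + t *\<^sub>R y) / r + \<delta>)"
    using r by (intro mult_left_mono) auto
  moreover have "r * ((1 - \<delta>) * (1 + \<bar>t\<bar> / r)) = (1 - \<delta>) * (r + \<bar>t\<bar>)"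
    using r by (simp add: field_simps)
  moreover have "r * (norm (x + t *\<^sub>R y) / r + \<delta>) = norm (x + t *\<^sub>R y) + \<delta> * r"
    using r by (simp add: field_simps)
  ultimately have "(1 - \<delta>) * (r + \<bar>t\<bar>) \<le> norm (x + t *\<^sub>R y) + \<delta> * r" by simp
  moreover have "\<delta> * r \<le> \<delta> * (r + \<bar>t\<bar>)"
    using close zero_le_dist[of S0 "x /\<^sub>R norm x"] by (intro mult_left_mono) linarith+
  ultimately show ?thesis by (simp add: r_def algebra_simps)
qed

text \<open>Reduction of octahedrality to finitely many unit vectors: because the unit sphere of a
  finite-dimensional subspace has finite nets, it suffices to find, for each finite set N of
  unit vectors of Z, a unit vector y of Z almost orthogonal to every element of N.\<close>
lemma octahedral_onI_unit_vectors:
  fixes Z :: "'a::real_normed_vector set"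
  assumes "subspace Z"
    and unit: "\<And>N \<delta>. finite N \<Longrightarrow> N \<subseteq> Z \<Longrightarrow> (\<And>S. S \<in> N \<Longrightarrow> norm S = 1) \<Longrightarrow> \<delta> > 0 \<Longrightarrow>
      \<exists>y\<in>Z. norm y = 1 \<and> (\<forall>S\<in>N. \<forall>s. (1 - \<delta>) * (1 + \<bar>s\<bar>) \<le> norm (S + s *\<^sub>R y))"
  shows "octahedral_on Z"
  unfolding octahedral_on_def
proof (intro allI impI)
  fix F :: "'a set" and \<epsilon> :: real
  assume F: "finite F \<and> F \<subseteq> Z \<and> \<epsilon> > 0"
  define \<delta> where "\<delta> = \<epsilon> / 2"
  have \<delta>: "\<delta> > 0" using F by (simp add: \<delta>_def)
  obtain N where N: "finite N" "N \<subseteq> span F \<inter> sphere 0 1"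
    and cover: "span F \<inter> sphere 0 1 \<subseteq> (\<Union>S\<in>N. ball S \<delta>)"
    using finite_net_sphere_span[of F \<delta>] F \<delta> by blast
  have "span F \<subseteq> Z" using F assms(1) by (simp add: span_minimal)
  hence "N \<subseteq> Z" using N by blast
  then obtain y where y: "y \<in> Z" "norm y = 1"
    and orth: "\<forall>S\<in>N. \<forall>s. (1 - \<delta>) * (1 + \<bar>s\<bar>) \<le> norm (S + s *\<^sub>R y)"
    using unit[OF N(1) _ _ \<delta>] N(2) by (metis IntD2 mem_sphere_0 subset_iff)
  have "(1 - \<epsilon>) * (norm x + \<bar>t\<bar>) \<le> norm (x + t *\<^sub>R y)" if x: "x \<in> span F" for x t
  proof (cases "x = 0")
    case True
    have "(1 - \<epsilon>) * \<bar>t\<bar> \<le> 1 * \<bar>t\<bar>" using F by (intro mult_right_mono) auto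
    thus ?thesis using True y by simp
  next
    case False
    have "x /\<^sub>R norm x \<in> span F \<inter> sphere 0 1" using x False by (simp add: span_scale)
    then obtain S0 where "S0 \<in> N" and close: "dist S0 (x /\<^sub>R norm x) < \<delta>"
      using cover by auto
    have "(1 - 2*\<delta>) * (norm x + \<bar>t\<bar>) \<le> norm (x + t *\<^sub>R y)"
      by (rule almost_orthogonal_perturb[OF False close]) (use orth \<open>S0 \<in> N\<close> in blast)
    thus ?thesis by (simp add: \<delta>_def)
  qed
  thus "\<exists>y\<in>Z. norm y = 1 \<and> (\<forall>x\<in>span F. \<forall>t. (1 - \<epsilon>) * (norm x + \<bar>t\<bar>) \<le> norm (x + t *\<^sub>R y))"
    using y by blast
qed

text \<open>Hahn-Banach in the form needed here: every vector y0 of a real normed space is normed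
  by a functional of norm at most 1. A partial linear functional dominated by the norm is
  encoded by its graph G; Zorn's lemma yields a maximal such graph, which must be total
  because any graph missing a vector z can be extended to the line through z.\<close>
definition dominated_graph :: "'a::real_normed_vector \<Rightarrow> ('a \<times> real) set \<Rightarrow> bool" where
  "dominated_graph y0 G \<longleftrightarrow> (y0, norm y0) \<in> G \<and>
     (\<forall>x a b. (x, a) \<in> G \<longrightarrow> (x, b) \<in> G \<longrightarrow> a = b) \<and>
     (\<forall>x a y b. (x, a) \<in> G \<longrightarrow> (y, b) \<in> G \<longrightarrow> (x + y, a + b) \<in> G) \<and>
     (\<forall>x a c. (x, a) \<in> G \<longrightarrow> (c *\<^sub>R x, c * a) \<in> G) \<and>
     (\<forall>x a. (x, a) \<in> G \<longrightarrow> a \<le> norm x)"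

lemma dominated_graphD:
  assumes "dominated_graph y0 G"
  shows dominated_graph_y0: "(y0, norm y0) \<in> G"
    and dominated_graph_fun: "\<And>x a b. (x, a) \<in> G \<Longrightarrow> (x, b) \<in> G \<Longrightarrow> a = b"
    and dominated_graph_add: "\<And>x a y b. (x, a) \<in> G \<Longrightarrow> (y, b) \<in> G \<Longrightarrow> (x + y, a + b) \<in> G"
    and dominated_graph_scale: "\<And>x a c. (x, a) \<in> G \<Longrightarrow> (c *\<^sub>R x, c * a) \<in> G"
    and dominated_graph_le: "\<And>x a. (x, a) \<in> G \<Longrightarrow> a \<le> norm x"
  using assms unfolding dominated_graph_def by blast+

lemma dominated_graph_line: "dominated_graph y0 {(c *\<^sub>R y0, c * norm y0) | c. True}"
  unfolding dominated_graph_def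
proof (intro conjI allI impI)
  show "(y0, norm y0) \<in> {(c *\<^sub>R y0, c * norm y0) |c. True}"
    by (auto intro!: exI[of _ 1])
next
  fix x a b
  assume "(x, a) \<in> {(c *\<^sub>R y0, c * norm y0) |c. True}" "(x, b) \<in> {(c *\<^sub>R y0, c * norm y0) |c. True}"
  then obtain c c' where "x = c *\<^sub>R y0" "a = c * norm y0" "x = c' *\<^sub>R y0" "b = c' * norm y0"
    by blast
  thus "a = b" by (cases "y0 = 0") (auto dest: scaleR_cancel_right[THEN iffD1])
next
  fix x a y b
  assume "(x, a) \<in> {(c *\<^sub>R y0, c * norm y0) |c. True}" "(y, b) \<in> {(c *\<^sub>R y0, c * norm y0) |c. True}"
  then obtain c c' where "x = c *\<^sub>R y0" "a = c * norm y0" "y = c' *\<^sub>R y0" "b = c' * norm y0"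
    by auto
  thus "(x + y, a + b) \<in> {(c *\<^sub>R y0, c * norm y0) |c. True}"
    by (auto intro!: exI[of _ "c + c'"] simp: algebra_simps)
qed (auto simp: mult_right_mono)

lemma dominated_graph_Union_chain:
  assumes C: "C \<in> chains {G. dominated_graph y0 G}" and "C \<noteq> {}"
  shows "dominated_graph y0 (\<Union>C)"
proof -
  have good: "\<And>G. G \<in> C \<Longrightarrow> dominated_graph y0 G" using chainsD2[OF C] by auto
  have common: "\<exists>G\<in>C. p \<in> G \<and> q \<in> G" if "p \<in> \<Union>C" "q \<in> \<Union>C" for p q
    using that chainsD[OF C] by blast
  obtain G0 where "G0 \<in> C" using \<open>C \<noteq> {}\<close> by auto
  show ?thesis
    unfolding dominated_graph_def
  proof (intro conjI allI impI)
    show "(y0, norm y0) \<in> \<Union>C" using good[OF \<open>G0 \<in> C\<close>] \<open>G0 \<in> C\<close>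
      by (auto dest: dominated_graph_y0)
  next
    fix x a b assume "(x, a) \<in> \<Union>C" "(x, b) \<in> \<Union>C"
    then obtain G where "G \<in> C" "(x, a) \<in> G" "(x, b) \<in> G" using common by blast
    thus "a = b" using good dominated_graph_fun by blast
  next
    fix x a y b assume "(x, a) \<in> \<Union>C" "(y, b) \<in> \<Union>C"
    then obtain G where "G \<in> C" "(x, a) \<in> G" "(y, b) \<in> G" using common by blast
    thus "(x + y, a + b) \<in> \<Union>C" using good dominated_graph_add by blast
  qed (use good dominated_graph_scale dominated_graph_le in blast)+
qed

text \<open>The value k assigned to a new vector z must satisfy
  a - \<parallel>m - z\<parallel> \<le> k \<le> \<parallel>m + z\<parallel> - a on the old graph; such k exists since the lower bounds
  never exceed the upper bounds (triangle inequality).\<close>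
lemma dominated_graph_extension_value:
  assumes G: "dominated_graph y0 G"
  obtains k where "\<And>m a. (m, a) \<in> G \<Longrightarrow> a - norm (m - z) \<le> k"
    and "\<And>m a. (m, a) \<in> G \<Longrightarrow> k \<le> norm (m + z) - a"
proof -
  have zero: "(0, 0) \<in> G" using dominated_graph_scale[OF G dominated_graph_y0[OF G], of 0] by simp
  have bd: "a1 - norm (m1 - z) \<le> norm (m2 + z) - a2" if "(m1, a1) \<in> G" "(m2, a2) \<in> G"
    for m1 a1 m2 a2
  proof -
    have "a1 + a2 \<le> norm (m1 + m2)"
      using dominated_graph_le[OF G dominated_graph_add[OF G that]] .
    also have "m1 + m2 = (m1 - z) + (m2 + z)" by simp
    also have "norm \<dots> \<le> norm (m1 - z) + norm (m2 + z)" by (rule norm_triangle_ineq)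
    finally show ?thesis by simp
  qed
  define L where "L = {a - norm (m - z) | m a. (m, a) \<in> G}"
  have "L \<noteq> {}" using zero unfolding L_def by blast
  moreover have "bdd_above L" unfolding L_def bdd_above_def
    using bd zero by (intro exI[of _ "norm (0 + z) - 0"]) force
  ultimately show ?thesis
    using that[of "Sup L"] bd by (auto simp: L_def intro!: cSup_upper cSup_least)
qed

lemma dominated_graph_unique_decomposition:
  assumes G: "dominated_graph y0 G" and z: "z \<notin> fst ` G"
    and "(m, a) \<in> G" "(m', a') \<in> G" "m + c *\<^sub>R z = m' + c' *\<^sub>R z"
  shows "c = c' \<and> m = m'"
proof (cases "c = c'")
  case False
  have "(m + (-1) *\<^sub>R m', a + (-1) * a') \<in> G"
    using assms(3,4) by (intro dominated_graph_add[OF G] dominated_graph_scale[OF G])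
  hence "((1 / (c' - c)) *\<^sub>R (m - m'), (1 / (c' - c)) * (a - a')) \<in> G"
    by (intro dominated_graph_scale[OF G]) simp
  moreover have "m - m' = (c' - c) *\<^sub>R z" using assms(5) by (simp add: algebra_simps)
  ultimately have "(z, (1 / (c' - c)) * (a - a')) \<in> G" using False by simp
  thus ?thesis using z by force
qed (use assms(5) in simp)

lemma dominated_graph_extension_le:
  assumes G: "dominated_graph y0 G" and "(m, a) \<in> G"
    and lower: "\<And>m a. (m, a) \<in> G \<Longrightarrow> a - norm (m - z) \<le> k"
    and upper: "\<And>m a. (m, a) \<in> G \<Longrightarrow> k \<le> norm (m + z) - a"
  shows "a + c * k \<le> norm (m + c *\<^sub>R z)"
proof (cases c "0::real" rule: linorder_cases)
  case equal thus ?thesis using dominated_graph_le[OF G assms(2)] by simp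
next
  case greater
  have "k \<le> norm ((1/c) *\<^sub>R m + z) - (1/c) * a"
    using assms(2) by (intro upper dominated_graph_scale[OF G])
  also have "(1/c) *\<^sub>R m + z = (1/c) *\<^sub>R (m + c *\<^sub>R z)" using greater by (simp add: algebra_simps)
  finally have "k \<le> norm (m + c *\<^sub>R z) / c - a / c" using greater by simp
  thus ?thesis using greater by (simp add: field_simps)
next
  case less
  have "(-1/c) * a - norm ((-1/c) *\<^sub>R m - z) \<le> k"
    using assms(2) by (intro lower dominated_graph_scale[OF G])
  also have "(-1/c) *\<^sub>R m - z = (-1/c) *\<^sub>R (m + c *\<^sub>R z)" using less by (simp add: algebra_simps)
  finally have "a / (-c) - norm (m + c *\<^sub>R z) / (-c) \<le> k" using less by simp
  thus ?thesis using less by (simp add: field_simps)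
qed

lemma dominated_graph_extend:
  assumes G: "dominated_graph y0 G" and z: "z \<notin> fst ` G"
  shows "\<exists>G'. dominated_graph y0 G' \<and> G \<subseteq> G' \<and> G' \<noteq> G"
proof -
  obtain k where lower: "\<And>m a. (m, a) \<in> G \<Longrightarrow> a - norm (m - z) \<le> k"
    and upper: "\<And>m a. (m, a) \<in> G \<Longrightarrow> k \<le> norm (m + z) - a"
    using dominated_graph_extension_value[OF G] by blast
  define G' where "G' = {(m + c *\<^sub>R z, a + c * k) | m a c. (m, a) \<in> G}"
  have sub: "G \<subseteq> G'" unfolding G'_def by force
  have "(0, 0) \<in> G" using dominated_graph_scale[OF G dominated_graph_y0[OF G], of 0] by simp
  hence "(z, k) \<in> G'" unfolding G'_def by force
  hence neq: "G' \<noteq> G" using z by force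
  note uniq = dominated_graph_unique_decomposition[OF G z]
  have "dominated_graph y0 G'"
    unfolding dominated_graph_def
  proof (intro conjI allI impI)
    show "(y0, norm y0) \<in> G'" using sub dominated_graph_y0[OF G] by blast
  next
    fix x a b assume "(x, a) \<in> G'" "(x, b) \<in> G'"
    then obtain m1 a1 c1 m2 a2 c2 where h: "x = m1 + c1 *\<^sub>R z" "a = a1 + c1 * k" "(m1, a1) \<in> G"
      "x = m2 + c2 *\<^sub>R z" "b = a2 + c2 * k" "(m2, a2) \<in> G" unfolding G'_def by blast
    thus "a = b" using uniq[of m1 a1 m2 a2 c1 c2] dominated_graph_fun[OF G] by auto
  next
    fix x a y b assume "(x, a) \<in> G'" "(y, b) \<in> G'"
    then obtain m1 a1 c1 m2 a2 c2 where h: "x = m1 + c1 *\<^sub>R z" "a = a1 + c1 * k" "(m1, a1) \<in> G"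
      "y = m2 + c2 *\<^sub>R z" "b = a2 + c2 * k" "(m2, a2) \<in> G" unfolding G'_def by blast
    have "(m1 + m2, a1 + a2) \<in> G" using dominated_graph_add[OF G] h by blast
    moreover have "x + y = (m1 + m2) + (c1 + c2) *\<^sub>R z" "a + b = (a1 + a2) + (c1 + c2) * k"
      using h by (simp_all add: algebra_simps)
    ultimately show "(x + y, a + b) \<in> G'" unfolding G'_def by blast
  next
    fix x a d assume "(x, a) \<in> G'"
    then obtain m1 a1 c1 where h: "x = m1 + c1 *\<^sub>R z" "a = a1 + c1 * k" "(m1, a1) \<in> G"
      unfolding G'_def by blast
    have "(d *\<^sub>R m1, d * a1) \<in> G" using dominated_graph_scale[OF G] h by blast
    moreover have "d *\<^sub>R x = d *\<^sub>R m1 + (d * c1) *\<^sub>R z" "d * a = d * a1 + (d * c1) * k"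
      using h by (simp_all add: algebra_simps)
    ultimately show "(d *\<^sub>R x, d * a) \<in> G'" unfolding G'_def by blast
  next
    fix x a assume "(x, a) \<in> G'"
    thus "a \<le> norm x" unfolding G'_def
      using dominated_graph_extension_le[OF G _ lower upper] by blast
  qed
  thus ?thesis using sub neq by blast
qed

lemma norming_functional:
  fixes y0 :: "'a::real_normed_vector"
  obtains \<phi> :: "'a \<Rightarrow>\<^sub>L real" where "norm \<phi> \<le> 1" "\<phi> y0 = norm y0"
proof -
  have "\<exists>M\<in>{G. dominated_graph y0 G}. \<forall>X\<in>{G. dominated_graph y0 G}. M \<subseteq> X \<longrightarrow> X = M"
  proof (rule Zorn_Lemma2, intro ballI)
    fix C assume C: "C \<in> chains {G. dominated_graph y0 G}"
    show "\<exists>U\<in>{G. dominated_graph y0 G}. \<forall>X\<in>C. X \<subseteq> U"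
      using dominated_graph_line dominated_graph_Union_chain[OF C]
      by (cases "C = {}") blast+
  qed
  then obtain G where G: "dominated_graph y0 G"
    and max: "\<And>X. dominated_graph y0 X \<Longrightarrow> G \<subseteq> X \<Longrightarrow> X = G" by blast
  have total: "\<exists>a. (x, a) \<in> G" for x
    using dominated_graph_extend[OF G, of x] max by force
  define f where "f x = (THE a. (x, a) \<in> G)" for x
  have fG: "(x, f x) \<in> G" for x
    unfolding f_def using total[of x] dominated_graph_fun[OF G] by (metis theI)
  have f_eq: "(x, a) \<in> G \<Longrightarrow> f x = a" for x a using fG dominated_graph_fun[OF G] by blast
  have lin: "linear f"
  proof
    show "f (x + y) = f x + f y" for x y using f_eq[OF dominated_graph_add[OF G fG fG]] .
    show "f (c *\<^sub>R x) = c *\<^sub>R f x" for c x using f_eq[OF dominated_graph_scale[OF G fG]] by simp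
  qed
  have bound: "norm (f x) \<le> 1 * norm x" for x
    using dominated_graph_le[OF G fG[of x]] dominated_graph_le[OF G dominated_graph_scale[OF G fG[of x], of "-1"]]
    by auto
  have bl: "bounded_linear f"
    using lin bound by (intro bounded_linear_intro[of f 1]) (auto simp: linear_add linear_scale)
  show ?thesis
  proof (rule that[of "Blinfun f"])
    show "norm (Blinfun f) \<le> 1"
      by (rule norm_blinfun_bound) (use bound bl in \<open>auto simp: bounded_linear_Blinfun_apply\<close>)
    show "Blinfun f y0 = norm y0"
      using bl f_eq[OF dominated_graph_y0[OF G]] by (simp add: bounded_linear_Blinfun_apply)
  qed
qed

lemma blinfun_almost_attains_norm:
  fixes A :: "'a::real_normed_vector \<Rightarrow>\<^sub>L 'b::real_normed_vector"
  assumes "\<eta> > 0"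
  obtains x where "norm x \<le> 1" "norm A - \<eta> \<le> norm (A x)"
proof (rule ccontr)
  assume "\<not> thesis"
  hence small: "\<And>x. norm x \<le> 1 \<Longrightarrow> norm (A x) < norm A - \<eta>" using that by force
  have nonneg: "0 \<le> norm A - \<eta>" using small[of 0] by simp
  have "norm (A x) \<le> (norm A - \<eta>) * norm x" for x
  proof (cases "x = 0")
    case False
    have "norm (A (x /\<^sub>R norm x)) < norm A - \<eta>" using False by (intro small) simp
    thus ?thesis using False by (simp add: blinfun.scaleR_right field_simps)
  qed simp
  hence "norm A \<le> norm A - \<eta>" using nonneg by (intro norm_blinfun_bound) auto
  thus False using assms by simp
qed

lemma norm_blinfun_apply_le:
  fixes A :: "'a::real_normed_vector \<Rightarrow>\<^sub>L 'b::real_normed_vector"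
  assumes "norm x \<le> 1"
  shows "norm (A x) \<le> norm A"
  using norm_blinfun[of A x] mult_left_mono[OF assms, of "norm A"] by simp

lemma rank_one_apply: "rank_one f y x = f x *\<^sub>R y"
proof -
  have "bounded_linear (\<lambda>x. f x *\<^sub>R y)"
    by (intro bounded_linear_compose[OF bounded_linear_scaleR_left] blinfun.bounded_linear_right)
  thus ?thesis unfolding rank_one_def by (simp add: bounded_linear_Blinfun_apply)
qed

lemma norm_rank_one:
  assumes "norm f = 1" "norm y = 1"
  shows "norm (rank_one f y) = 1"
proof (rule antisym)
  show "norm (rank_one f y) \<le> 1"
    by (rule norm_blinfun_bound) (use assms norm_blinfun[of f] in \<open>auto simp: rank_one_apply\<close>)
  have "norm f \<le> norm (rank_one f y)"
    by (rule norm_blinfun_bound) (use assms norm_blinfun[of "rank_one f y"] in \<open>auto simp: rank_one_apply\<close>)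
  thus "1 \<le> norm (rank_one f y)" using assms by simp
qed

text \<open>Composing a unit operator S with a suitable norm-one functional on its range gives a
  functional of norm close to 1 (apply Hahn-Banach at an almost norming vector of S).\<close>
lemma almost_norming_composition:
  fixes S :: "'a::real_normed_vector \<Rightarrow>\<^sub>L 'b::real_normed_vector"
  assumes "norm S = 1" "\<delta> > 0"
  obtains \<phi> :: "'b \<Rightarrow>\<^sub>L real" where "norm \<phi> \<le> 1" "1 - \<delta> \<le> norm (\<phi> o\<^sub>L S)"
proof -
  obtain x where x: "norm x \<le> 1" "1 - \<delta> \<le> norm (S x)"
    using blinfun_almost_attains_norm[OF assms(2), of S] assms(1) by auto
  obtain \<phi> :: "'b \<Rightarrow>\<^sub>L real" where \<phi>: "norm \<phi> \<le> 1" "\<phi> (S x) = norm (S x)"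
    using norming_functional by blast
  have "1 - \<delta> \<le> (\<phi> o\<^sub>L S) x" using x \<phi> by simp
  also have "\<dots> \<le> norm (\<phi> o\<^sub>L S)"
    using norm_blinfun_apply_le[OF x(1), of "\<phi> o\<^sub>L S"] by simp
  finally show ?thesis using that \<phi> by blast
qed

lemma common_almost_norming_point:
  fixes g f :: "'a::real_normed_vector \<Rightarrow>\<^sub>L real"
  assumes "norm g \<le> 1" "norm f \<le> 1" "\<delta> > 0" "2 - 3*\<delta> \<le> norm (g + f)"
  obtains z where "norm z \<le> 1" "1 - 4*\<delta> \<le> g z" "1 - 4*\<delta> \<le> f z"
proof -
  obtain x where x: "norm x \<le> 1" "norm (g + f) - \<delta> \<le> norm ((g + f) x)"
    using blinfun_almost_attains_norm[OF assms(3), of "g + f"] by blast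
  define z where "z = (if (g + f) x \<ge> 0 then x else - x)"
  have z: "norm z \<le> 1" using x by (simp add: z_def)
  have "2 - 4*\<delta> \<le> g z + f z"
    using x assms(4) by (auto simp: z_def plus_blinfun.rep_eq blinfun.minus_right)
  moreover have "\<bar>g z\<bar> \<le> 1" "\<bar>f z\<bar> \<le> 1"
    using norm_blinfun_apply_le[OF z, of g] norm_blinfun_apply_le[OF z, of f] assms(1,2) by auto
  ultimately show ?thesis using that z by auto
qed

lemma common_almost_norming_point_operator:
  fixes S :: "'a::real_normed_vector \<Rightarrow>\<^sub>L 'b::real_normed_vector"
    and \<phi> :: "'b \<Rightarrow>\<^sub>L real" and f :: "'a \<Rightarrow>\<^sub>L real"
  assumes S: "norm S = 1" and \<phi>: "norm \<phi> \<le> 1" and g: "1 - \<delta> \<le> norm (\<phi> o\<^sub>L S)"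
    and f: "norm f = 1" and \<delta>: "0 < \<delta>" "\<delta> \<le> 1"
    and orth: "(1 - \<delta>) * (norm (\<phi> o\<^sub>L S) + 1) \<le> norm ((\<phi> o\<^sub>L S) + f)"
  obtains z where "norm z \<le> 1" "1 - 4*\<delta> \<le> norm (S z)" "1 - 4*\<delta> \<le> f z"
proof -
  have g_le: "norm (\<phi> o\<^sub>L S) \<le> 1"
    using norm_blinfun_compose[of \<phi> S] \<phi> S by simp
  have "2 - 3*\<delta> \<le> (1 - \<delta>) * (2 - \<delta>)" by (simp add: algebra_simps)
  also have "\<dots> \<le> (1 - \<delta>) * (norm (\<phi> o\<^sub>L S) + 1)"
    using g \<delta> by (intro mult_left_mono) auto
  finally have sum: "2 - 3*\<delta> \<le> norm ((\<phi> o\<^sub>L S) + f)" using orth by linarith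
  obtain z where z: "norm z \<le> 1" "1 - 4*\<delta> \<le> (\<phi> o\<^sub>L S) z" "1 - 4*\<delta> \<le> f z"
    by (rule common_almost_norming_point[OF g_le _ \<delta>(1) sum]) (simp add: f)
  have "(\<phi> o\<^sub>L S) z \<le> norm \<phi> * norm (S z)" using norm_blinfun[of \<phi> "S z"] by simp
  also have "\<dots> \<le> norm (S z)" using \<phi> by (simp add: mult_left_le_one_le)
  finally show ?thesis using that z by auto
qed

text \<open>Lower estimate for S + t (f \<otimes> y): test it at a point z where both S and f are almost
  normed, and use that y is almost orthogonal to S z.\<close>
lemma rank_one_perturbation_lower_bound:
  fixes S :: "'a::real_normed_vector \<Rightarrow>\<^sub>L 'b::real_normed_vector" and f :: "'a \<Rightarrow>\<^sub>L real"
  assumes z: "norm z \<le> 1" and Sz: "1 - 4*\<delta> \<le> norm (S z)" and fz: "1 - 4*\<delta> \<le> f z"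
    and \<delta>: "0 < \<delta>" "\<delta> \<le> 1/4"
    and y: "\<And>s. (1 - \<delta>) * (norm (S z) + \<bar>s\<bar>) \<le> norm (S z + s *\<^sub>R y)"
  shows "(1 - 5*\<delta>) * (1 + \<bar>t\<bar>) \<le> norm (S + t *\<^sub>R rank_one f y)"
proof -
  have "(1 - 4*\<delta>) * (1 + \<bar>t\<bar>) \<le> norm (S z) + \<bar>t * f z\<bar>"
  proof -
    have "\<bar>t\<bar> * (1 - 4*\<delta>) \<le> \<bar>t\<bar> * f z" using fz by (intro mult_left_mono) auto
    thus ?thesis using Sz fz \<delta> by (simp add: abs_mult algebra_simps)
  qed
  hence "(1 - \<delta>) * ((1 - 4*\<delta>) * (1 + \<bar>t\<bar>)) \<le> (1 - \<delta>) * (norm (S z) + \<bar>t * f z\<bar>)"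
    using \<delta> by (intro mult_left_mono) auto
  also have "\<dots> \<le> norm (S z + (t * f z) *\<^sub>R y)" by (rule y)
  also have "S z + (t * f z) *\<^sub>R y = (S + t *\<^sub>R rank_one f y) z"
    by (simp add: plus_blinfun.rep_eq scaleR_blinfun.rep_eq rank_one_apply)
  also have "norm \<dots> \<le> norm (S + t *\<^sub>R rank_one f y)" by (rule norm_blinfun_apply_le[OF z])
  finally have "(1 - \<delta>) * (1 - 4*\<delta>) * (1 + \<bar>t\<bar>) \<le> norm (S + t *\<^sub>R rank_one f y)"
    by (simp add: mult.assoc)
  moreover have "(1 - 5*\<delta>) * (1 + \<bar>t\<bar>) \<le> (1 - \<delta>) * (1 - 4*\<delta>) * (1 + \<bar>t\<bar>)"
    by (intro mult_right_mono) (auto simp: algebra_simps)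
  ultimately show ?thesis by linarith
qed

lemma octahedral_normE:
  fixes F :: "'a::real_normed_vector set"
  assumes "octahedral_norm TYPE('a)" "finite F" "\<epsilon> > 0"
  obtains y :: 'a where "norm y = 1"
    "\<And>x t. x \<in> span F \<Longrightarrow> (1 - \<epsilon>) * (norm x + \<bar>t\<bar>) \<le> norm (x + t *\<^sub>R y)"
proof -
  have "\<exists>y\<in>UNIV. norm y = 1 \<and>
      (\<forall>x\<in>span F. \<forall>t::real. (1 - \<epsilon>) * (norm x + \<bar>t\<bar>) \<le> norm (x + t *\<^sub>R y))"
    using assms(1)[unfolded octahedral_on_def, rule_format, of F \<epsilon>] assms(2,3) by simp
  thus ?thesis using that by blast
qed

text \<open>Each S is
  almost normed by a functional \<phi>_S \<circ> S; f is chosen almost orthogonal to these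
  (octahedrality of X*), which yields points z_S almost norming both S and f; finally y is
  chosen almost orthogonal to the vectors S z_S (octahedrality of Y).\<close>
lemma octahedral_rank_one_almost_orthogonal:
  fixes N :: "('a::real_normed_vector \<Rightarrow>\<^sub>L 'b::real_normed_vector) set"
  assumes octX: "octahedral_norm TYPE('a \<Rightarrow>\<^sub>L real)" and octY: "octahedral_norm TYPE('b)"
    and N: "finite N" "\<And>S. S \<in> N \<Longrightarrow> norm S = 1" and \<delta>: "0 < \<delta>" "\<delta> \<le> 1/4"
  obtains f :: "'a \<Rightarrow>\<^sub>L real" and y :: 'b where "norm f = 1" "norm y = 1"
    "\<And>S t. S \<in> N \<Longrightarrow> (1 - 5*\<delta>) * (1 + \<bar>t\<bar>) \<le> norm (S + t *\<^sub>R rank_one f y)"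
proof -
  have "\<forall>S\<in>N. \<exists>\<phi> :: 'b \<Rightarrow>\<^sub>L real. norm \<phi> \<le> 1 \<and> 1 - \<delta> \<le> norm (\<phi> o\<^sub>L S)"
    using almost_norming_composition[OF N(2) \<delta>(1)] by blast
  from bchoice[OF this] obtain \<phi> :: "('a \<Rightarrow>\<^sub>L 'b) \<Rightarrow> ('b \<Rightarrow>\<^sub>L real)"
    where \<phi>: "\<forall>S\<in>N. norm (\<phi> S) \<le> 1 \<and> 1 - \<delta> \<le> norm (\<phi> S o\<^sub>L S)"
    by blast
  obtain f :: "'a \<Rightarrow>\<^sub>L real" where f: "norm f = 1" and f_orth:
      "\<And>x t. x \<in> span ((\<lambda>S. \<phi> S o\<^sub>L S) ` N) \<Longrightarrow> (1 - \<delta>) * (norm x + \<bar>t\<bar>) \<le> norm (x + t *\<^sub>R f)"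
    using octahedral_normE[OF octX _ \<delta>(1), of "(\<lambda>S. \<phi> S o\<^sub>L S) ` N"] N(1) by blast
  have "\<forall>S\<in>N. \<exists>z. norm z \<le> 1 \<and> 1 - 4*\<delta> \<le> norm (S z) \<and> 1 - 4*\<delta> \<le> f z"
  proof
    fix S assume S: "S \<in> N"
    have "(1 - \<delta>) * (norm (\<phi> S o\<^sub>L S) + \<bar>1\<bar>) \<le> norm ((\<phi> S o\<^sub>L S) + 1 *\<^sub>R f)"
      using S by (intro f_orth span_base) auto
    hence orth: "(1 - \<delta>) * (norm (\<phi> S o\<^sub>L S) + 1) \<le> norm ((\<phi> S o\<^sub>L S) + f)" by simp
    obtain z where "norm z \<le> 1" "1 - 4*\<delta> \<le> norm (S z)" "1 - 4*\<delta> \<le> f z"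
      by (rule common_almost_norming_point_operator[OF N(2)[OF S] _ _ f \<delta>(1) _ orth])
         (use \<phi> S \<delta>(2) in auto)
    thus "\<exists>z. norm z \<le> 1 \<and> 1 - 4*\<delta> \<le> norm (S z) \<and> 1 - 4*\<delta> \<le> f z" by blast
  qed
  from bchoice[OF this] obtain z :: "('a \<Rightarrow>\<^sub>L 'b) \<Rightarrow> 'a"
    where "\<forall>S\<in>N. norm (z S) \<le> 1 \<and> 1 - 4*\<delta> \<le> norm (S (z S)) \<and> 1 - 4*\<delta> \<le> f (z S)"
    by blast
  hence z: "\<And>S. S \<in> N \<Longrightarrow> norm (z S) \<le> 1"
    and Sz: "\<And>S. S \<in> N \<Longrightarrow> 1 - 4*\<delta> \<le> norm (S (z S))"
    and fz: "\<And>S. S \<in> N \<Longrightarrow> 1 - 4*\<delta> \<le> f (z S)" by blast+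
  obtain y :: 'b where y: "norm y = 1"
    and y_orth: "\<And>x s. x \<in> span ((\<lambda>S. S (z S)) ` N) \<Longrightarrow> (1 - \<delta>) * (norm x + \<bar>s\<bar>) \<le> norm (x + s *\<^sub>R y)"
    using octahedral_normE[OF octY _ \<delta>(1), of "(\<lambda>S. S (z S)) ` N"] N(1) by blast
  show ?thesis
  proof (rule that[OF f y])
    fix S t assume S: "S \<in> N"
    show "(1 - 5*\<delta>) * (1 + \<bar>t\<bar>) \<le> norm (S + t *\<^sub>R rank_one f y)"
      using S by (intro rank_one_perturbation_lower_bound[OF z Sz fz \<delta>] y_orth span_base) auto
  qed
qed

theorem mainTheorem8:
  fixes H :: "('a::banach \<Rightarrow>\<^sub>L 'b::banach) set"
  assumes "octahedral_norm TYPE('a \<Rightarrow>\<^sub>L real)"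
    and "octahedral_norm TYPE('b)"
    and "subspace H" and "closed H"
    and "tensor_dual \<subseteq> H"
  shows "octahedral_on H"
proof (rule octahedral_onI_unit_vectors[OF \<open>subspace H\<close>])
  fix N and \<delta> :: real assume N: "finite N" "N \<subseteq> H" "\<And>S. S \<in> N \<Longrightarrow> norm S = 1" and "\<delta> > 0"
  define \<eta> where "\<eta> = min (\<delta>/5) (1/4)"
  have \<eta>: "0 < \<eta>" "\<eta> \<le> 1/4" using \<open>\<delta> > 0\<close> by (auto simp: \<eta>_def)
  obtain f y where fy: "norm f = 1" "norm y = 1"
    and orth: "\<And>S t. S \<in> N \<Longrightarrow> (1 - 5*\<eta>) * (1 + \<bar>t\<bar>) \<le> norm (S + t *\<^sub>R rank_one f y)"
    using octahedral_rank_one_almost_orthogonal[OF assms(1,2) N(1,3) \<eta>] by blast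
  have "rank_one f y \<in> H"
    using assms(5) unfolding tensor_dual_def by (auto intro: span_base)
  moreover have "(1 - \<delta>) * (1 + \<bar>t\<bar>) \<le> (1 - 5*\<eta>) * (1 + \<bar>t\<bar>)" for t
    by (intro mult_right_mono) (auto simp: \<eta>_def)
  ultimately show "\<exists>T\<in>H. norm T = 1 \<and> (\<forall>S\<in>N. \<forall>t. (1 - \<delta>) * (1 + \<bar>t\<bar>) \<le> norm (S + t *\<^sub>R T))"
    using norm_rank_one[OF fy] orth order_trans by blast
qed

end
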